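(* Every normal subgroup of $G_{\mathtt{ALD}}$ that contains the image $\mathrm{sh}_0(G_{\mathtt{ALD}})$ contains all generators $S_\alpha$ and $A_\alpha$ such that the address $\alpha$ contains at least one $0$.
   Context: Addresses are finite sequences over $\{0,1\}$, $\varepsilon$ empty, concatenation by juxtaposition; incomparable means neither is a prefix of the other. $G_{\mathtt{ALD}}$ is the group generated by $S_\alpha,A_\alpha$ ($\alpha\in\{0,1\}^*$) subject to the relations, with $X,Y\in\{S,A\}$ and arbitrary addresses $\alpha,\beta,\delta$ ($\delta$ possibly empty): $X_\alpha Y_\beta=Y_\beta X_\alpha$ for $\alpha,\beta$ incomparable; $X_{\alpha0\delta}S_\alpha=S_\alpha X_{\alpha00\delta}X_{\alpha10\delta}$; $X_{\alpha10\delta}S_\alpha=S_\alpha X_{\alpha01\delta}$; $X_{\alpha11\delta}S_\alpha=S_\alpha X_{\alpha11\delta}$; $X_{\alpha0\delta}A_\alpha=A_\alpha X_{\alpha00\delta}$; $X_{\alpha10\delta}A_\alpha=A_\alpha X_{\alpha01\delta}$; $X_{\alpha11\delta}A_\alpha=A_\alpha X_{\alpha1\delta}$; $S_\alpha S_{\alpha1}S_\alpha=S_{\alpha1}S_\alpha S_{\alpha1}S_{\alpha0}$; $S_\alpha S_{\alpha1}A_\alpha=A_{\alpha1}S_\alpha S_{\alpha0}$; $A_\alpha S_\alpha=S_{\alpha1}S_\alpha A_{\alpha1}A_{\alpha0}$. $\mathrm{sh}_0$ is the endomorphism with $S_\alpha\mapsto S_{0\alpha}$, $A_\alpha\mapsto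 A_{0\alpha}$. *)

theory Defs
  imports "HOL-Algebra.Coset"
begin

datatype bit = B0 | B1
type_synonym addr = "bit list"

datatype gen = S addr | A addr

text \<open>Words in the free group: letters (g, True) = g, (g, False) = g^-1.\<close>
type_synonym word = "(gen \<times> bool) list"

definition pw :: "gen list \<Rightarrow> word" where
  "pw gs = map (\<lambda>g. (g, True)) gs"

definition incomparable :: "addr \<Rightarrow> addr \<Rightarrow> bool" where
  "incomparable a b \<longleftrightarrow> \<not> (\<exists>c. b = a @ c) \<and> \<not> (\<exists>c. a = b @ c)"

inductive ald_rel :: "gen list \<Rightarrow> gen list \<Rightarrow> bool" where
  comm: "\<lbrakk>X \<in> {S, A}; Y \<in> {S, A}; incomparable a b\<rbrakk> \<Longrightarrow>
           ald_rel [X a, Y b] [Y b, X a]"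
| r1: "X \<in> {S, A} \<Longrightarrow> ald_rel [X (a @ [B0] @ d), S a] [S a, X (a @ [B0,B0] @ d), X (a @ [B1,B0] @ d)]"
| r2: "X \<in> {S, A} \<Longrightarrow> ald_rel [X (a @ [B1,B0] @ d), S a] [S a, X (a @ [B0,B1] @ d)]"
| r3: "X \<in> {S, A} \<Longrightarrow> ald_rel [X (a @ [B1,B1] @ d), S a] [S a, X (a @ [B1,B1] @ d)]"
| r4: "X \<in> {S, A} \<Longrightarrow> ald_rel [X (a @ [B0] @ d), A a] [A a, X (a @ [B0,B0] @ d)]"
| r5: "X \<in> {S, A} \<Longrightarrow> ald_rel [X (a @ [B1,B0] @ d), A a] [A a, X (a @ [B0,B1] @ d)]"
| r6: "X \<in> {S, A} \<Longrightarrow> ald_rel [X (a @ [B1,B1] @ d), A a] [A a, X (a @ [B1] @ d)]"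
| r7: "ald_rel [S a, S (a @ [B1]), S a] [S (a @ [B1]), S a, S (a @ [B1]), S (a @ [B0])]"
| r8: "ald_rel [S a, S (a @ [B1]), A a] [A (a @ [B1]), S a, S (a @ [B0])]"
| r9: "ald_rel [A a, S a] [S (a @ [B1]), S a, A (a @ [B1]), A (a @ [B0])]"

inductive ald_eqv :: "word \<Rightarrow> word \<Rightarrow> bool" where
  refl: "ald_eqv w w"
| sym: "ald_eqv u v \<Longrightarrow> ald_eqv v u"
| trans: "ald_eqv u v \<Longrightarrow> ald_eqv v w \<Longrightarrow> ald_eqv u w"
| ctxt: "ald_eqv u v \<Longrightarrow> ald_eqv (x @ u @ y) (x @ v @ y)"
| cancel: "ald_eqv [(g, b), (g, \<not> b)] []"
| rel: "ald_rel l r \<Longrightarrow> ald_eqv (pw l) (pw r)"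

definition ald_class :: "word \<Rightarrow> word set" where
  "ald_class w = {v. ald_eqv w v}"

definition G_ALD :: "word set monoid" where
  "G_ALD = \<lparr> carrier = range ald_class,
             mult = (\<lambda>U V. \<Union>u\<in>U. \<Union>v\<in>V. ald_class (u @ v)),
             one = ald_class [] \<rparr>"

fun sh0_gen :: "gen \<Rightarrow> gen" where
  "sh0_gen (S a) = S (B0 # a)"
| "sh0_gen (A a) = A (B0 # a)"

definition sh0_word :: "word \<Rightarrow> word" where
  "sh0_word w = map (\<lambda>(g, b). (sh0_gen g, b)) w"

definition sh0_image :: "word set set" where
  "sh0_image = {ald_class (sh0_word w) | w. True}"

end

theory Submission
  imports Defs
begin

text \<open>Relation r2 says that \<open>S_\<alpha>\<close> conjugates \<open>X_\<alpha>01\<delta>\<close> to \<open>X_\<alpha>10\<delta>\<close>, so a normal subgroup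
  containing the former contains the latter. An address containing a \<open>0\<close> has the form
  \<open>1^k 0 \<delta>\<close>; applying this with \<open>\<alpha> = 1^(k-1)\<close>, then \<open>1^(k-2)\<close>, and so on, reduces
  \<open>X_(1^k 0 \<delta>)\<close> to the generator \<open>X_(0 1^k \<delta>)\<close>, which lies in the image of \<open>sh_0\<close>.\<close>

lemma (in normal) conj_mem_normal:
  assumes "x \<in> carrier G" "s \<in> carrier G" "x \<otimes> s = s \<otimes> y" "y \<in> H"
  shows "x \<in> H"
proof -
  have "x = x \<otimes> s \<otimes> inv s"
    using assms(1,2) by (simp add: m_assoc)
  also have "\<dots> = s \<otimes> y \<otimes> inv s"
    using assms(3) by simp
  also have "\<dots> \<in> H"
    using assms(2,4) by (rule inv_op_closed2)
  finally show ?thesis .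
qed

lemma ald_class_eqI: "ald_eqv u v \<Longrightarrow> ald_class u = ald_class v"
  by (auto simp: ald_class_def intro: ald_eqv.trans ald_eqv.sym)

lemma ald_class_carrier: "ald_class w \<in> carrier G_ALD"
  by (simp add: G_ALD_def)

lemma ald_class_mult: "ald_class u \<otimes>\<^bsub>G_ALD\<^esub> ald_class v = ald_class (u @ v)"
proof -
  have append_cong: "ald_eqv (u @ v) (u' @ v')" if "ald_eqv u u'" "ald_eqv v v'" for u' v'
    using ald_eqv.ctxt[OF that(1), of "[]" v] ald_eqv.ctxt[OF that(2), of u' "[]"]
    by (auto intro: ald_eqv.trans)
  have "(\<Union>u'\<in>ald_class u. \<Union>v'\<in>ald_class v. ald_class (u' @ v')) = ald_class (u @ v)"
  proof
    show "(\<Union>u'\<in>ald_class u. \<Union>v'\<in>ald_class v. ald_class (u' @ v')) \<subseteq> ald_class (u @ v)"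
      by (auto simp: ald_class_def intro: ald_eqv.trans append_cong)
    have "u \<in> ald_class u" "v \<in> ald_class v"
      by (simp_all add: ald_class_def ald_eqv.refl)
    then show "ald_class (u @ v) \<subseteq> (\<Union>u'\<in>ald_class u. \<Union>v'\<in>ald_class v. ald_class (u' @ v'))"
      by blast
  qed
  then show ?thesis
    by (simp add: G_ALD_def)
qed

lemma ald_class_relI: "ald_rel l r \<Longrightarrow> ald_class (pw l) = ald_class (pw r)"
  by (rule ald_class_eqI, rule ald_eqv.rel)

lemma ald_gen_in_sh0_image:
  "X \<in> {S, A} \<Longrightarrow> ald_class (pw [X (B0 # d)]) \<in> sh0_image"
  unfolding sh0_image_def
  by (rule CollectI, rule exI[of _ "pw [X d]"]) (auto simp: sh0_word_def pw_def)

lemma normal_swap_10_from_01: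
  assumes "N \<lhd> G_ALD" "X \<in> {S, A}"
    and "ald_class (pw [X (a @ [B0, B1] @ d)]) \<in> N"
  shows "ald_class (pw [X (a @ [B1, B0] @ d)]) \<in> N"
proof -
  interpret normal N G_ALD by (rule assms(1))
  have "ald_class (pw [X (a @ [B1, B0] @ d), S a]) = ald_class (pw [S a, X (a @ [B0, B1] @ d)])"
    by (rule ald_class_relI, rule ald_rel.r2[OF assms(2)])
  then have "ald_class (pw [X (a @ [B1, B0] @ d)]) \<otimes>\<^bsub>G_ALD\<^esub> ald_class (pw [S a])
      = ald_class (pw [S a]) \<otimes>\<^bsub>G_ALD\<^esub> ald_class (pw [X (a @ [B0, B1] @ d)])"
    by (simp add: ald_class_mult pw_def)
  then show ?thesis
    by (rule conj_mem_normal[OF ald_class_carrier ald_class_carrier _ assms(3)])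
qed

lemma normal_gen_ones_B0:
  assumes "N \<lhd> G_ALD" "sh0_image \<subseteq> N" "X \<in> {S, A}"
  shows "ald_class (pw [X (replicate k B1 @ B0 # d)]) \<in> N"
proof (induction k arbitrary: d)
  case 0
  show ?case
    using ald_gen_in_sh0_image[OF assms(3)] assms(2) by auto
next
  case (Suc k)
  have "replicate (Suc k) B1 @ B0 # d = replicate k B1 @ [B1, B0] @ d"
    by (simp add: replicate_append_same[symmetric])
  moreover have "ald_class (pw [X (replicate k B1 @ [B0, B1] @ d)]) \<in> N"
    using Suc.IH[of "B1 # d"] by simp
  ultimately show ?case
    using normal_swap_10_from_01[OF assms(1,3)] by simp
qed

lemma ones_B0_decomp:
  assumes "B0 \<in> set a"
  obtains k d where "a = replicate k B1 @ B0 # d"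
proof -
  obtain ys d where a: "a = ys @ B0 # d" "B0 \<notin> set ys"
    using assms by (metis split_list_first)
  have "ys = replicate (length ys) B1"
    using a(2) by (metis bit.exhaust replicate_length_same)
  with a(1) show thesis
    using that by metis
qed

theorem lemma4p5:
  assumes "N \<lhd> G_ALD"
    and "sh0_image \<subseteq> N"
  shows "\<forall>a. B0 \<in> set a \<longrightarrow> ald_class (pw [S a]) \<in> N \<and> ald_class (pw [A a]) \<in> N"
proof (intro allI impI)
  fix a assume "B0 \<in> set a"
  then obtain k d where "a = replicate k B1 @ B0 # d"
    by (rule ones_B0_decomp)
  then show "ald_class (pw [S a]) \<in> N \<and> ald_class (pw [A a]) \<in> N"
    using normal_gen_ones_B0[OF assms, of S] normal_gen_ones_B0[OF assms, of A] by simp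
qed

end
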